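(* Let $\lambda$ be Lebesgue measure on $[0,1]$ and let $T:[0,1]\to[0,1]$ be an invertible, ergodic, $\lambda$-preserving transformation which is rigid rank 1, with associated numbers $n_k$ and sets $A_k$ (as in the context). Let $\mathcal{R}_k=\bigcup_{i=0}^{n_k-1}T^iA_k$ and $\hat{\mathcal{R}}_k=\bigcup_{i=0}^{n_k-1}T^i\big(A_k\cap T^{-n_k}A_k\cap T^{n_k}A_k\big)$. Let $\sigma$ be a self-joining of $([0,1],T,\lambda)$ with disintegration $(\sigma_x)_{x\in[0,1]}$ over the projection to the first coordinate. Then for every $k$ and every $0\le j<n_k$, $$n_k\int_{T^jA_k}\sigma_x(\mathcal{R}_k^c)\,d\lambda(x)\le\lambda(\hat{\mathcal{R}}_k^c).$$
   Context: $T$ is called rigid rank 1 if there exist positive integers $n_j$ and measurable sets $A_j\subset[0,1]$ such that: (1) $\lim_{j\to\infty}\lambda\big(\bigcup_{i=0}^{n_j-1}T^iA_j\big)=1$; (2) the sets $A_j,TA_j,\dots,T^{n_j-1}A_j$ are pairwise disjoint; (3) $\lim_{j\to\infty}\lambda(T^{n_j}A_j\cap A_j)/\lambda(A_j)=1$; (4) for every $\varepsilon>0$ there exist, for each $j$, metric balls $B^{(j)}_0,\dots,B^{(j)}_{n_j-1}\subset[0,1]$ of diameter at most $\varepsilon$ such that $\lim_{j\to\infty}\sum_{i=0}^{n_j-1}\lambda(T^iA_j\setminus B^{(j)}_i)=0$. A self-joining of $([0,1],T,\lambda)$ is a $T\times T$-invariant Borel probability measure on $[0,1]\times[0,1]$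 both of whose marginals equal $\lambda$; $\sigma_x$ is regarded as a probability measure on $[0,1]$ by identifying $\{x\}\times[0,1]$ with $[0,1]$. Complements are taken in $[0,1]$. *)

theory Defs
  imports "HOL-Probability.Probability"
begin

abbreviation lam :: "real measure" where
  "lam \<equiv> restrict_space lborel {0..1}"

definition invertible_mpt :: "(real \<Rightarrow> real) \<Rightarrow> bool" where
  "invertible_mpt T \<longleftrightarrow>
     T \<in> measurable lam lam \<and> bij_betw T {0..1} {0..1} \<and>
     the_inv_into {0..1} T \<in> measurable lam lam \<and>
     distr lam lam T = lam"

definition ergodic :: "(real \<Rightarrow> real) \<Rightarrow> bool" where
  "ergodic T \<longleftrightarrow>
     (\<forall>E \<in> sets lam. T -` E \<inter> {0..1} = E \<longrightarrow> measure lam E = 0 \<or> measure lam E = 1)"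

definition rigid_rank_one_seq :: "(real \<Rightarrow> real) \<Rightarrow> (nat \<Rightarrow> nat) \<Rightarrow> (nat \<Rightarrow> real set) \<Rightarrow> bool" where
  "rigid_rank_one_seq T n A \<longleftrightarrow>
     (\<forall>j. 0 < n j \<and> A j \<in> sets lam) \<and>
     ((\<lambda>j. measure lam (\<Union>i<n j. (T ^^ i) ` A j)) \<longlonglongrightarrow> 1) \<and>
     (\<forall>j. disjoint_family_on (\<lambda>i. (T ^^ i) ` A j) {..<n j}) \<and>
     ((\<lambda>j. measure lam ((T ^^ n j) ` A j \<inter> A j) / measure lam (A j)) \<longlonglongrightarrow> 1) \<and>
     (\<forall>\<epsilon>>0. \<exists>B :: nat \<Rightarrow> nat \<Rightarrow> real set.
        (\<forall>j i. i < n j \<longrightarrow>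
           (\<exists>c r. c \<in> {0..1} \<and> B j i = ball c r \<inter> {0..1}) \<and> diameter (B j i) \<le> \<epsilon>) \<and>
        ((\<lambda>j. \<Sum>i<n j. measure lam ((T ^^ i) ` A j - B j i)) \<longlonglongrightarrow> 0))"

definition rigid_rank_one :: "(real \<Rightarrow> real) \<Rightarrow> bool" where
  "rigid_rank_one T \<longleftrightarrow> (\<exists>n A. rigid_rank_one_seq T n A)"

definition self_joining :: "(real \<Rightarrow> real) \<Rightarrow> (real \<times> real) measure \<Rightarrow> bool" where
  "self_joining T \<sigma> \<longleftrightarrow>
     sets \<sigma> = sets (lam \<Otimes>\<^sub>M lam) \<and> prob_space \<sigma> \<and>
     distr \<sigma> lam fst = lam \<and> distr \<sigma> lam snd = lam \<and>
     distr \<sigma> (lam \<Otimes>\<^sub>M lam) (\<lambda>p. (T (fst p), T (snd p))) = \<sigma>"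

definition disintegration :: "(real \<times> real) measure \<Rightarrow> (real \<Rightarrow> real measure) \<Rightarrow> bool" where
  "disintegration \<sigma> \<sigma>x \<longleftrightarrow>
     (\<forall>x \<in> {0..1}. prob_space (\<sigma>x x) \<and> sets (\<sigma>x x) = sets lam) \<and>
     (\<forall>F \<in> sets lam. (\<lambda>x. measure (\<sigma>x x) F) \<in> borel_measurable lam) \<and>
     (\<forall>E \<in> sets lam. \<forall>F \<in> sets lam.
        measure \<sigma> (E \<times> F) = (LINT x:E|lam. measure (\<sigma>x x) F))"

definition tower :: "(real \<Rightarrow> real) \<Rightarrow> nat \<Rightarrow> real set \<Rightarrow> real set" where
  "tower T m B = (\<Union>i<m. (T ^^ i) ` B)"

end

theory Submission
  imports Defs
begin

text \<open>Write \<open>R\<close> for the tower over \<open>A\<close>, \<open>R'\<close> for the tower over the core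
\<open>A \<inter> T\<^sup>-\<^sup>N A \<inter> T\<^sup>N A\<close>, and \<open>P = T\<^sup>-\<^sup>j (R\<^sup>c)\<close>. By \<open>T \<times> T\<close>-invariance of \<open>\<sigma>\<close>,
\<open>\<sigma>(T\<^sup>j A \<times> R\<^sup>c) = \<sigma>(A \<times> P) = \<sigma>(T\<^sup>m A \<times> T\<^sup>m P)\<close> for every \<open>m\<close>, and for \<open>m < N\<close> these
rectangles are disjoint because the levels \<open>T\<^sup>m A\<close> are. No point of \<open>T\<^sup>m P\<close> lies in \<open>R'\<close>:
if \<open>T\<^sup>m z = T\<^sup>l w\<close> with \<open>w\<close> in the core, then \<open>T\<^sup>-\<^sup>N w, w, T\<^sup>N w \<in> A\<close>, so the orbit of
\<open>w\<close> stays in \<open>R\<close> from time \<open>-N\<close> to \<open>2N\<close>, and \<open>T\<^sup>j z = T\<^sup>j\<^sup>+\<^sup>l\<^sup>-\<^sup>m w\<close> would lie in \<open>R\<close>.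
Hence the union of the rectangles lies in \<open>[0,1] \<times> R'\<^sup>c\<close>, whose \<open>\<sigma>\<close>-measure is
\<open>\<lambda>(R'\<^sup>c)\<close> by the second marginal.\<close>

lemma space_lam [simp]: "space lam = {0..1}"
  by (simp add: space_restrict_space)

lemma lam_compl_in_sets: "B \<in> sets lam \<Longrightarrow> {0..1} - B \<in> sets lam"
  by (metis sets.compl_sets space_lam)

lemma inj_on_vimage_image_Int: "inj_on f S \<Longrightarrow> B \<subseteq> S \<Longrightarrow> f -` f ` B \<inter> S = B"
  by (auto simp: inj_on_def)

lemma funpow_measurable: "f \<in> measurable M M \<Longrightarrow> f ^^ k \<in> measurable M M"
  by (induction k) (simp_all add: measurable_comp)

lemma image_in_sets_bij_betw:
  assumes bij: "bij_betw f (space M) (space M)"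
    and inv: "the_inv_into (space M) f \<in> measurable M M" and B: "B \<in> sets M"
  shows "f ` B \<in> sets M"
proof -
  have "B \<subseteq> space M" using B by (rule sets.sets_into_space)
  then have "f ` B = the_inv_into (space M) f -` B \<inter> space M"
    using bij unfolding bij_betw_def
    by (force simp: the_inv_into_f_f f_the_inv_into_f
        intro: image_eqI[OF f_the_inv_into_f[symmetric]])
  then show ?thesis using measurable_sets[OF inv B] by simp
qed

lemma invertible_mpt_funpow_image_in_sets:
  assumes T: "invertible_mpt T" and B: "B \<in> sets lam"
  shows "(T ^^ k) ` B \<in> sets lam"
proof (induction k)
  case 0
  then show ?case using B by simp
next
  case (Suc k)
  with T have "T ` (T ^^ k) ` B \<in> sets lam"
    unfolding invertible_mpt_def using image_in_sets_bij_betw[of T lam] by simp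
  then show ?case by (simp add: image_comp)
qed

lemma invertible_mpt_inj_on_funpow: "invertible_mpt T \<Longrightarrow> inj_on (T ^^ k) {0..1}"
  unfolding invertible_mpt_def using bij_betw_funpow bij_betw_imp_inj_on by blast

lemma tower_in_sets_lam:
  "invertible_mpt T \<Longrightarrow> B \<in> sets lam \<Longrightarrow> tower T N B \<in> sets lam"
  unfolding tower_def by (auto intro: invertible_mpt_funpow_image_in_sets)

lemma distr_funpow_eq:
  assumes f: "f \<in> measurable M M" and inv: "distr M M f = M"
  shows "distr M M (f ^^ k) = M"
proof (induction k)
  case 0
  then show ?case by (simp add: distr_id[unfolded id_def])
next
  case (Suc k)
  have "distr M M (f ^^ Suc k) = distr (distr M M (f ^^ k)) M f"
    using distr_distr[OF f funpow_measurable[OF f]] by simp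
  also have "\<dots> = M" using Suc inv by simp
  finally show ?case .
qed

lemma self_joining_space: "self_joining T \<sigma> \<Longrightarrow> space \<sigma> = {0..1} \<times> {0..1}"
  unfolding self_joining_def by (metis sets_eq_imp_space_eq space_lam space_pair_measure)

lemma self_joining_distr_funpow:
  assumes \<sigma>: "self_joining T \<sigma>" and T: "T \<in> measurable lam lam"
  shows "distr \<sigma> \<sigma> (map_prod (T ^^ k) (T ^^ k)) = \<sigma>"
proof -
  have sets: "sets \<sigma> = sets (lam \<Otimes>\<^sub>M lam)" using \<sigma> by (simp add: self_joining_def)
  have "map_prod T T \<in> measurable (lam \<Otimes>\<^sub>M lam) (lam \<Otimes>\<^sub>M lam)"
    using T by (simp add: map_prod_def)
  then have meas: "map_prod T T \<in> measurable \<sigma> \<sigma>"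
    by (simp add: measurable_cong_sets[OF sets sets])
  have "distr \<sigma> \<sigma> (map_prod T T) = distr \<sigma> (lam \<Otimes>\<^sub>M lam) (\<lambda>p. (T (fst p), T (snd p)))"
    using sets by (intro distr_cong) (simp_all add: map_prod_def split_beta)
  also have "\<dots> = \<sigma>" using \<sigma> by (simp add: self_joining_def)
  finally have "distr \<sigma> \<sigma> (map_prod T T) = \<sigma>" .
  moreover have "map_prod T T ^^ k = map_prod (T ^^ k) (T ^^ k)"
    by (induction k) (auto simp: fun_eq_iff)
  ultimately show ?thesis using meas distr_funpow_eq by metis
qed

lemma self_joining_measure_vimage_Times:
  assumes \<sigma>: "self_joining T \<sigma>" and T: "T \<in> measurable lam lam"
    and X: "X \<in> sets lam" and Y: "Y \<in> sets lam"
  shows "measure \<sigma> (((T ^^ k) -` X \<inter> {0..1}) \<times> ((T ^^ k) -` Y \<inter> {0..1})) = measure \<sigma> (X \<times> Y)"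
proof -
  have sets: "sets \<sigma> = sets (lam \<Otimes>\<^sub>M lam)" using \<sigma> by (simp add: self_joining_def)
  have "map_prod (T ^^ k) (T ^^ k) \<in> measurable (lam \<Otimes>\<^sub>M lam) (lam \<Otimes>\<^sub>M lam)"
    using funpow_measurable[OF T] by (simp add: map_prod_def)
  then have meas: "map_prod (T ^^ k) (T ^^ k) \<in> measurable \<sigma> \<sigma>"
    by (simp add: measurable_cong_sets[OF sets sets])
  have "X \<times> Y \<in> sets \<sigma>" using X Y sets by simp
  then have "measure \<sigma> (X \<times> Y) = measure \<sigma> (map_prod (T ^^ k) (T ^^ k) -` (X \<times> Y) \<inter> space \<sigma>)"
    using measure_distr[OF meas] self_joining_distr_funpow[OF \<sigma> T] by metis
  also have "map_prod (T ^^ k) (T ^^ k) -` (X \<times> Y) \<inter> space \<sigma>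
      = ((T ^^ k) -` X \<inter> {0..1}) \<times> ((T ^^ k) -` Y \<inter> {0..1})"
    by (auto simp: self_joining_space[OF \<sigma>])
  finally show ?thesis by simp
qed

lemma self_joining_measure_vimage_image_Times:
  assumes T: "invertible_mpt T" and \<sigma>: "self_joining T \<sigma>"
    and X: "X \<in> sets lam" and Y: "Y \<in> sets lam"
  shows "measure \<sigma> (X \<times> ((T ^^ k) -` Y \<inter> {0..1})) = measure \<sigma> ((T ^^ k) ` X \<times> Y)"
proof -
  have "X \<subseteq> {0..1}" using sets.sets_into_space[OF X] by simp
  then have "(T ^^ k) -` (T ^^ k) ` X \<inter> {0..1} = X"
    by (intro inj_on_vimage_image_Int invertible_mpt_inj_on_funpow[OF T])
  moreover have "T \<in> measurable lam lam" using T by (simp add: invertible_mpt_def)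
  moreover have "(T ^^ k) ` X \<in> sets lam" using T X by (rule invertible_mpt_funpow_image_in_sets)
  ultimately show ?thesis using self_joining_measure_vimage_Times[OF \<sigma> _ _ Y] by metis
qed

lemma self_joining_measure_snd:
  assumes \<sigma>: "self_joining T \<sigma>" and Y: "Y \<in> sets lam"
  shows "measure \<sigma> ({0..1} \<times> Y) = measure lam Y"
proof -
  have sets: "sets \<sigma> = sets (lam \<Otimes>\<^sub>M lam)" using \<sigma> by (simp add: self_joining_def)
  have "snd \<in> measurable \<sigma> lam" by (simp add: measurable_cong_sets[OF sets refl])
  then have "measure lam Y = measure \<sigma> (snd -` Y \<inter> space \<sigma>)"
    using measure_distr[OF _ Y] \<sigma> unfolding self_joining_def by metis
  also have "snd -` Y \<inter> space \<sigma> = {0..1} \<times> Y"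
    using sets.sets_into_space[OF Y] by (auto simp: self_joining_space[OF \<sigma>])
  finally show ?thesis by simp
qed

lemma self_joining_measure_UN_funpow_Times:
  assumes T: "invertible_mpt T" and \<sigma>: "self_joining T \<sigma>"
    and A: "A \<in> sets lam" and P: "P \<in> sets lam"
    and disj: "disjoint_family_on (\<lambda>i. (T ^^ i) ` A) {..<N}"
  shows "measure \<sigma> (\<Union>m<N. (T ^^ m) ` A \<times> (T ^^ m) ` P) = real N * measure \<sigma> (A \<times> P)"
proof -
  interpret prob_space \<sigma> using \<sigma> by (simp add: self_joining_def)
  have "measure \<sigma> ((T ^^ m) ` A \<times> (T ^^ m) ` P) = measure \<sigma> (A \<times> P)" for m
  proof -
    have "P \<subseteq> {0..1}" using sets.sets_into_space[OF P] by simp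
    then have "(T ^^ m) -` (T ^^ m) ` P \<inter> {0..1} = P"
      by (intro inj_on_vimage_image_Int invertible_mpt_inj_on_funpow[OF T])
    then show ?thesis
      using self_joining_measure_vimage_image_Times[OF T \<sigma> A
          invertible_mpt_funpow_image_in_sets[OF T P]] by metis
  qed
  moreover have "(T ^^ m) ` A \<times> (T ^^ m) ` P \<in> sets \<sigma>" for m
    using \<sigma> invertible_mpt_funpow_image_in_sets[OF T] A P by (simp add: self_joining_def)
  moreover have "disjoint_family_on (\<lambda>m. (T ^^ m) ` A \<times> (T ^^ m) ` P) {..<N}"
    using disj unfolding disjoint_family_on_def by blast
  ultimately show ?thesis
    using finite_measure_finite_Union[of "{..<N}" "\<lambda>m. (T ^^ m) ` A \<times> (T ^^ m) ` P"]
    by (simp add: image_subset_iff)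
qed

lemma funpow_eq_funpow_cancel:
  assumes T: "bij_betw T S S" and x: "x \<in> S" and y: "y \<in> S"
    and "b \<le> a" and eq: "(T ^^ a) x = (T ^^ b) y"
  shows "(T ^^ (a - b)) x = y"
proof -
  have "(T ^^ b) ((T ^^ (a - b)) x) = (T ^^ b) y"
    using \<open>b \<le> a\<close> eq by (metis funpow_add le_add_diff_inverse comp_apply)
  moreover have "(T ^^ (a - b)) x \<in> S"
    using bij_betw_funpow[OF T] x by (meson bij_betwE)
  ultimately show ?thesis
    using bij_betw_imp_inj_on[OF bij_betw_funpow[OF T]] y by (meson inj_onD)
qed

lemma funpow_mem_tower:
  assumes returns: "\<And>r. r < q \<Longrightarrow> (T ^^ (r * N)) x \<in> B" and i: "i < q * N"
  shows "(T ^^ i) x \<in> tower T N B"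
proof -
  have "0 < N" using i by (cases N) simp_all
  have "i div N < q" using i by (simp add: div_less_iff_less_mult \<open>0 < N\<close>)
  moreover have "(T ^^ i) x = (T ^^ (i mod N)) ((T ^^ (i div N * N)) x)"
    by (metis comp_apply funpow_add mod_div_mult_eq)
  moreover have "i mod N < N" using \<open>0 < N\<close> by simp
  ultimately show ?thesis
    using returns unfolding tower_def by blast
qed

lemma funpow_notin_core_tower:
  assumes T: "bij_betw T S S" and A: "A \<subseteq> S" and z: "z \<in> S" and "j < N" "m < N"
    and escape: "(T ^^ j) z \<notin> tower T N A"
  shows "(T ^^ m) z \<notin> tower T N (A \<inter> ((T ^^ N) -` A \<inter> S) \<inter> (T ^^ N) ` A)"
proof
  assume "(T ^^ m) z \<in> tower T N (A \<inter> ((T ^^ N) -` A \<inter> S) \<inter> (T ^^ N) ` A)"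
  then obtain l a where "l < N" and a: "a \<in> A" "(T ^^ N) a \<in> A" "(T ^^ N) ((T ^^ N) a) \<in> A"
    and "(T ^^ m) z = (T ^^ l) ((T ^^ N) a)"
    unfolding tower_def by auto
  then have "(T ^^ (l + N)) a = (T ^^ m) z" by (simp add: funpow_add)
  then have "(T ^^ (l + N - m)) a = z"
    using funpow_eq_funpow_cancel[OF T _ z] A a \<open>m < N\<close> by auto
  then have "(T ^^ j) z = (T ^^ (j + (l + N - m))) a" by (simp add: funpow_add)
  moreover have "(T ^^ (r * N)) a \<in> A" if "r < 3" for r
    using that a by (auto simp: less_Suc_eq numeral_3_eq_3 funpow_add)
  ultimately have "(T ^^ j) z \<in> tower T N A"
    using funpow_mem_tower[where q = 3] \<open>j < N\<close> \<open>l < N\<close> by simp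
  with escape show False ..
qed

lemma self_joining_tower_bound:
  assumes T: "invertible_mpt T" and \<sigma>: "self_joining T \<sigma>" and A: "A \<in> sets lam"
    and disj: "disjoint_family_on (\<lambda>i. (T ^^ i) ` A) {..<N}" and "j < N"
  shows "real N * measure \<sigma> ((T ^^ j) ` A \<times> ({0..1} - tower T N A))
    \<le> measure lam ({0..1} - tower T N (A \<inter> ((T ^^ N) -` A \<inter> {0..1}) \<inter> (T ^^ N) ` A))"
proof -
  interpret prob_space \<sigma> using \<sigma> by (simp add: self_joining_def)
  have Tm: "T \<in> measurable lam lam" and bij: "bij_betw T {0..1} {0..1}"
    using T by (simp_all add: invertible_mpt_def)
  have A_sub: "A \<subseteq> {0..1}" using sets.sets_into_space[OF A] by simp
  define Ah where "Ah = A \<inter> ((T ^^ N) -` A \<inter> {0..1}) \<inter> (T ^^ N) ` A"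
  define P where "P = (T ^^ j) -` ({0..1} - tower T N A) \<inter> {0..1}"
  have R: "{0..1} - tower T N A \<in> sets lam"
    using tower_in_sets_lam[OF T A] by (rule lam_compl_in_sets)
  have P: "P \<in> sets lam"
    unfolding P_def using measurable_sets[OF funpow_measurable[OF Tm] R] by simp
  have "Ah \<in> sets lam" unfolding Ah_def
    using A measurable_sets[OF funpow_measurable[OF Tm] A]
      invertible_mpt_funpow_image_in_sets[OF T A] by auto
  then have Rh: "{0..1} - tower T N Ah \<in> sets lam"
    using tower_in_sets_lam[OF T] lam_compl_in_sets by blast
  have "(T ^^ m) ` P \<subseteq> {0..1} - tower T N Ah" if "m < N" for m
    using funpow_notin_core_tower[OF bij A_sub _ \<open>j < N\<close> that]
      bij_betw_imp_surj_on[OF bij_betw_funpow[OF bij]]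
    unfolding Ah_def P_def by blast
  moreover have "(T ^^ m) ` A \<subseteq> {0..1}" for m
    using A_sub bij_betw_imp_surj_on[OF bij_betw_funpow[OF bij]] by blast
  ultimately have UN_sub:
    "(\<Union>m<N. (T ^^ m) ` A \<times> (T ^^ m) ` P) \<subseteq> {0..1} \<times> ({0..1} - tower T N Ah)"
    by blast
  have "measure \<sigma> ((T ^^ j) ` A \<times> ({0..1} - tower T N A)) = measure \<sigma> (A \<times> P)"
    using self_joining_measure_vimage_image_Times[OF T \<sigma> A R] by (simp add: P_def)
  then have "real N * measure \<sigma> ((T ^^ j) ` A \<times> ({0..1} - tower T N A))
      = measure \<sigma> (\<Union>m<N. (T ^^ m) ` A \<times> (T ^^ m) ` P)"
    using self_joining_measure_UN_funpow_Times[OF T \<sigma> A P disj] by simp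
  also have "\<dots> \<le> measure \<sigma> ({0..1} \<times> ({0..1} - tower T N Ah))"
    using UN_sub Rh \<sigma> sets.top[of lam] by (intro finite_measure_mono) (auto simp: self_joining_def)
  also have "\<dots> = measure lam ({0..1} - tower T N Ah)"
    using \<sigma> Rh by (rule self_joining_measure_snd)
  finally show ?thesis unfolding Ah_def .
qed

theorem mainTheorem3:
  fixes T :: "real \<Rightarrow> real" and n :: "nat \<Rightarrow> nat" and A :: "nat \<Rightarrow> real set"
    and \<sigma> :: "(real \<times> real) measure" and \<sigma>x :: "real \<Rightarrow> real measure"
  assumes "invertible_mpt T" and "ergodic T"
    and "rigid_rank_one_seq T n A"
    and "self_joining T \<sigma>" and "disintegration \<sigma> \<sigma>x"
  shows "\<forall>k j. j < n k \<longrightarrow>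
    real (n k) * (LINT x:((T ^^ j) ` A k)|lam. measure (\<sigma>x x) ({0..1} - tower T (n k) (A k)))
      \<le> measure lam ({0..1} - tower T (n k)
            (A k \<inter> ((T ^^ n k) -` A k \<inter> {0..1}) \<inter> (T ^^ n k) ` A k))"
proof (intro allI impI)
  fix k j assume "j < n k"
  have A: "A k \<in> sets lam" and disj: "disjoint_family_on (\<lambda>i. (T ^^ i) ` A k) {..<n k}"
    using assms(3) by (simp_all add: rigid_rank_one_seq_def)
  have "{0..1} - tower T (n k) (A k) \<in> sets lam"
    using tower_in_sets_lam[OF assms(1) A] by (rule lam_compl_in_sets)
  then have "(LINT x:((T ^^ j) ` A k)|lam. measure (\<sigma>x x) ({0..1} - tower T (n k) (A k)))
      = measure \<sigma> ((T ^^ j) ` A k \<times> ({0..1} - tower T (n k) (A k)))"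
    using assms(5) invertible_mpt_funpow_image_in_sets[OF assms(1) A]
    by (simp add: disintegration_def)
  then show "real (n k) * (LINT x:((T ^^ j) ` A k)|lam. measure (\<sigma>x x) ({0..1} - tower T (n k) (A k)))
      \<le> measure lam ({0..1} - tower T (n k)
            (A k \<inter> ((T ^^ n k) -` A k \<inter> {0..1}) \<inter> (T ^^ n k) ` A k))"
    using self_joining_tower_bound[OF assms(1,4) A disj \<open>j < n k\<close>] by simp
qed

end
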